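(* There is an absolute constant $c>0$ such that the following holds. Let $0<\varepsilon\le1$ and $1\le m\le n^{3/2-\varepsilon}$. If $\alpha\in\mathcal L$ is neither trivial nor a spider, then \[\frac{1}{n^{|E(\alpha)|/2}}\cdot n^{\frac{w(V(\alpha))-w(S_{\min})}{2}}\ \le\ \frac{1}{n^{c\,\varepsilon\,|E(\alpha)|}},\] where $S_{\min}$ is a minimum vertex separator of $\alpha$.
   Context: A shape $\alpha=(V(\alpha),E(\alpha),U_\alpha,V_\alpha)$ consists of a finite vertex set $V(\alpha)$, each vertex typed as a "circle" or a "square"; a collection $E(\alpha)$ of edges, each joining a circle and a square and carrying a positive integer label; and two subsets $U_\alpha,V_\alpha\subseteq V(\alpha)$ (possibly intersecting). $W_\alpha=V(\alpha)\setminus(U_\alpha\cup V_\alpha)$. The shape is proper if it has no parallel edges. The degree $\deg(x)$ of a vertex is the sum of labels of incident edges, and $|E(\alpha)|$ denotes the sum of all edge labels. A shape is trivial if $U_\alpha=V_\alpha$, $W_\alpha=\emptyset$ and $E(\alpha)=\emptyset$. A left spider is a proper shape having two distinct squares $i,j\in U_\alpha$ of degree $1$ both adjacent to a common circle; a right spider is the same with $V_\alpha$ in place of $U_\alpha$; a spider is a left or right spider. For $S\subseteq V(\alpha)$, $w(S)=(\#\text{circles in }S)\log_n m+(\#\text{squares in }S)$. A vertex separator is a set $S\subseteq V(\alpha)$ such that every path from a vertex of $U_\alpha$ to a vertex of $V_\alpha$ (including length-zero paths, so $U_\alpha\cap V_\alpha\subseteq S$) contains a vertex of $S$; a minimum vertex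 separator minimizes $w$. $\mathcal L$ (depending on parameters $\delta,\tau>0$) is the set of proper shapes $\alpha$ such that: $U_\alpha,V_\alpha$ contain only squares and $|U_\alpha|,|V_\alpha|\le n^\delta$; $W_\alpha$ has no vertices of degree $0$; for every square $i$, $\deg(i)+\mathbf 1[i\in U_\alpha]+\mathbf 1[i\in V_\alpha]$ is even; every circle has even degree at least $4$; and $|E(\alpha)|\le n^\tau$. *)

theory Defs
  imports Complex_Main "HOL-Library.Multiset"
begin

text \<open>Vertices are natural numbers (any finite vertex set can be relabelled).
  Each vertex is typed as a circle (circ v) or a square (not circ v).
  Edges form a multiset of triples (circle, square, label), so parallel edges are allowed
  in a general shape; properness excludes them.\<close>

record shape =
  verts :: "nat set"
  circ  :: "nat \<Rightarrow> bool"
  edges :: "(nat \<times> nat \<times> nat) multiset"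
  Uset  :: "nat set"
  Vset  :: "nat set"

definition wf_shape :: "shape \<Rightarrow> bool" where
  "wf_shape a \<longleftrightarrow> finite (verts a) \<and> Uset a \<subseteq> verts a \<and> Vset a \<subseteq> verts a \<and>
     (\<forall>(x, y, l) \<in># edges a. x \<in> verts a \<and> y \<in> verts a \<and> circ a x \<and> \<not> circ a y \<and> 0 < l)"

definition Wset :: "shape \<Rightarrow> nat set" where
  "Wset a = verts a - (Uset a \<union> Vset a)"

definition proper :: "shape \<Rightarrow> bool" where
  "proper a \<longleftrightarrow> (\<forall>x y. size (filter_mset (\<lambda>(p, q, _). p = x \<and> q = y) (edges a)) \<le> 1)"

definition deg :: "shape \<Rightarrow> nat \<Rightarrow> nat" where
  "deg a v = sum_mset (image_mset (\<lambda>(p, q, l). l) (filter_mset (\<lambda>(p, q, _). p = v \<or> q = v) (edges a)))"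

text \<open>|E(alpha)|: total sum of edge labels.\<close>
definition total_label :: "shape \<Rightarrow> nat" where
  "total_label a = sum_mset (image_mset (\<lambda>(p, q, l). l) (edges a))"

definition adjacent :: "shape \<Rightarrow> nat \<Rightarrow> nat \<Rightarrow> bool" where
  "adjacent a x y \<longleftrightarrow> (\<exists>l. (x, y, l) \<in># edges a \<or> (y, x, l) \<in># edges a)"

definition trivial_shape :: "shape \<Rightarrow> bool" where
  "trivial_shape a \<longleftrightarrow> Uset a = Vset a \<and> Wset a = {} \<and> edges a = {#}"

definition left_spider :: "shape \<Rightarrow> bool" where
  "left_spider a \<longleftrightarrow> proper a \<and> (\<exists>i j c. i \<noteq> j \<and> i \<in> Uset a \<and> j \<in> Uset a \<and>
      \<not> circ a i \<and> \<not> circ a j \<and> deg a i = 1 \<and> deg a j = 1 \<and>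
      c \<in> verts a \<and> circ a c \<and> adjacent a c i \<and> adjacent a c j)"

definition right_spider :: "shape \<Rightarrow> bool" where
  "right_spider a \<longleftrightarrow> proper a \<and> (\<exists>i j c. i \<noteq> j \<and> i \<in> Vset a \<and> j \<in> Vset a \<and>
      \<not> circ a i \<and> \<not> circ a j \<and> deg a i = 1 \<and> deg a j = 1 \<and>
      c \<in> verts a \<and> circ a c \<and> adjacent a c i \<and> adjacent a c j)"

definition spider :: "shape \<Rightarrow> bool" where
  "spider a \<longleftrightarrow> left_spider a \<or> right_spider a"

definition wt :: "nat \<Rightarrow> nat \<Rightarrow> shape \<Rightarrow> nat set \<Rightarrow> real" where
  "wt n m a S = real (card {v \<in> S. circ a v}) * log (real n) (real m) + real (card {v \<in> S. \<not> circ a v})"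

definition is_path :: "shape \<Rightarrow> nat list \<Rightarrow> bool" where
  "is_path a ps \<longleftrightarrow> ps \<noteq> [] \<and> distinct ps \<and> set ps \<subseteq> verts a \<and>
     (\<forall>k. Suc k < length ps \<longrightarrow> adjacent a (ps ! k) (ps ! Suc k))"

definition vertex_separator :: "shape \<Rightarrow> nat set \<Rightarrow> bool" where
  "vertex_separator a S \<longleftrightarrow> S \<subseteq> verts a \<and>
     (\<forall>ps. is_path a ps \<longrightarrow> hd ps \<in> Uset a \<longrightarrow> last ps \<in> Vset a \<longrightarrow> set ps \<inter> S \<noteq> {})"

definition min_vertex_separator :: "nat \<Rightarrow> nat \<Rightarrow> shape \<Rightarrow> nat set \<Rightarrow> bool" where
  "min_vertex_separator n m a S \<longleftrightarrow> vertex_separator a S \<and>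
     (\<forall>T. vertex_separator a T \<longrightarrow> wt n m a S \<le> wt n m a T)"

definition in_L :: "real \<Rightarrow> real \<Rightarrow> nat \<Rightarrow> shape \<Rightarrow> bool" where
  "in_L \<delta> \<tau> n a \<longleftrightarrow> proper a \<and>
     (\<forall>v \<in> Uset a \<union> Vset a. \<not> circ a v) \<and>
     real (card (Uset a)) \<le> real n powr \<delta> \<and> real (card (Vset a)) \<le> real n powr \<delta> \<and>
     (\<forall>v \<in> Wset a. deg a v \<noteq> 0) \<and>
     (\<forall>i \<in> verts a. \<not> circ a i \<longrightarrow>
        even (deg a i + (if i \<in> Uset a then 1 else 0) + (if i \<in> Vset a then 1 else 0))) \<and>
     (\<forall>c \<in> verts a. circ a c \<longrightarrow> even (deg a c) \<and> 4 \<le> deg a c) \<and>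
     real (total_label a) \<le> real n powr \<tau>"

end

theory Submission
  imports Defs
begin

text \<open>Spread the weight of every vertex v outside the separator S (log n m for a circle, 1 for a
  square) over the edges at v in proportion to their labels, and collect the charges of each edge
  at its circle end c. The circle itself hands out log n m \<le> 3/2 - \<epsilon>, and only if c \<notin> S.
  The square end q of an edge of label l passes on l / deg q \<le> l / 2, unless q is a pendant square
  (degree 1, so l = 1), which passes on l / 2 + 1 / 2. By parity a pendant square lies in exactly one
  of U and V; as \<alpha> is not a spider, c has at most one pendant neighbour in each, and if c \<notin> S
  not one in both, for then U - c - V would be a path avoiding S. Hence the edges at c carry at most
  deg c / 2 + 2 - \<epsilon> \<le> (1 - \<epsilon>/4) deg c, since deg c \<ge> 4, and summing over all circles gives
  w(V) - w(S) \<le> (1 - \<epsilon>/4) |E|, which is the claim with constant 1/8.\<close>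

lemma adjacent_sym: "adjacent a x y \<longleftrightarrow> adjacent a y x"
  unfolding adjacent_def by blast

lemma wf_shape_edgeD:
  assumes "wf_shape a" "(p, q, l) \<in># edges a"
  shows "p \<in> verts a" "q \<in> verts a" "circ a p" "\<not> circ a q" "0 < l"
  using assms unfolding wf_shape_def by fastforce+

lemma proper_count_edges_le_1:
  assumes "proper a"
  shows "count (edges a) e \<le> 1"
proof -
  obtain p q l where e: "e = (p, q, l)" by (cases e)
  have "count (edges a) e = count (filter_mset (\<lambda>(x, y, _). x = p \<and> y = q) (edges a)) e"
    by (simp add: e)
  also have "\<dots> \<le> size (filter_mset (\<lambda>(x, y, _). x = p \<and> y = q) (edges a))"
    by (rule count_le_size)
  also have "\<dots> \<le> 1"
    using assms unfolding proper_def by blast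
  finally show ?thesis .
qed

lemma proper_edge_label_unique:
  assumes "proper a" "(p, q, l) \<in># edges a" "(p, q, l') \<in># edges a"
  shows "l = l'"
proof (rule ccontr)
  assume "l \<noteq> l'"
  let ?M = "filter_mset (\<lambda>(x, y, _). x = p \<and> y = q) (edges a)"
  have "{#(p, q, l), (p, q, l')#} \<subseteq># ?M"
    using assms \<open>l \<noteq> l'\<close> by (auto simp: insert_subset_eq_iff in_diff_count)
  then have "2 \<le> size ?M"
    using size_mset_mono by fastforce
  moreover have "size ?M \<le> 1"
    using assms(1) unfolding proper_def by blast
  ultimately show False
    by simp
qed

lemma sum_mset_image_eq_sum_set_mset:
  assumes "\<And>x. count M x \<le> 1"
  shows "sum_mset (image_mset f M) = sum f (set_mset M)"
proof -
  have "mset_set (set_mset M) = M"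
  proof (rule multiset_eqI)
    fix x
    show "count (mset_set (set_mset M)) x = count M x"
      using assms[of x] by (cases "count M x") (auto simp: count_mset_set' not_in_iff)
  qed
  then show ?thesis
    by (metis sum_unfold_sum_mset)
qed

lemma sum_mset_image_filter_mset:
  "sum_mset (image_mset f (filter_mset P M)) = sum_mset (image_mset (\<lambda>x. if P x then f x else 0) M)"
  by (induction M) auto

lemma deg_eq_sum:
  assumes "proper a"
  shows "deg a v = (\<Sum>(p, q, l)\<in>set_mset (edges a). if p = v \<or> q = v then l else 0)"
proof -
  have "deg a v = (\<Sum>e\<in>set_mset (edges a).
      if (case e of (p, q, _) \<Rightarrow> p = v \<or> q = v) then (case e of (_, _, l) \<Rightarrow> l) else 0)"
    unfolding deg_def sum_mset_image_filter_mset
    by (rule sum_mset_image_eq_sum_set_mset[OF proper_count_edges_le_1[OF assms]])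
  also have "\<dots> = (\<Sum>(p, q, l)\<in>set_mset (edges a). if p = v \<or> q = v then l else 0)"
    by (rule sum.cong) (auto split: prod.splits)
  finally show ?thesis .
qed

lemma total_label_eq_sum:
  assumes "proper a"
  shows "total_label a = (\<Sum>(p, q, l)\<in>set_mset (edges a). l)"
  unfolding total_label_def
  using sum_mset_image_eq_sum_set_mset[OF proper_count_edges_le_1[OF assms]] .

lemma label_le_deg:
  assumes "proper a" "(p, q, l) \<in># edges a"
  shows "l \<le> deg a q"
  unfolding deg_eq_sum[OF assms(1)]
  using member_le_sum[of "(p, q, l)" "set_mset (edges a)" "\<lambda>(p', q', l). if p' = q \<or> q' = q then l else 0"]
    assms(2) by simp

definition vertex_wt :: "nat \<Rightarrow> nat \<Rightarrow> shape \<Rightarrow> nat \<Rightarrow> real" where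
  "vertex_wt n m a v = (if circ a v then log (real n) (real m) else 1)"

lemma wt_eq_sum_vertex_wt:
  assumes "finite X"
  shows "wt n m a X = (\<Sum>v\<in>X. vertex_wt n m a v)"
  using assms by (simp add: wt_def vertex_wt_def sum.If_cases Int_def conj_commute)

lemma wt_diff:
  assumes "finite T" "S \<subseteq> T"
  shows "wt n m a T - wt n m a S = wt n m a (T - S)"
  using assms by (simp add: wt_eq_sum_vertex_wt sum_diff finite_subset)

definition charge :: "shape \<Rightarrow> (nat \<Rightarrow> real) \<Rightarrow> nat set \<Rightarrow> nat \<Rightarrow> nat \<Rightarrow> real" where
  "charge a w X v l = (if v \<in> X then real l * w v / real (deg a v) else 0)"

lemma weight_eq_sum_incident_charges:
  assumes "proper a" "0 < deg a v"
  shows "w v = (\<Sum>(p, q, l)\<in>set_mset (edges a). if p = v \<or> q = v then real l * w v / real (deg a v) else 0)"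
proof -
  have "(\<Sum>(p, q, l)\<in>set_mset (edges a). if p = v \<or> q = v then real l * w v / real (deg a v) else 0)
      = (\<Sum>(p, q, l)\<in>set_mset (edges a). if p = v \<or> q = v then real l else 0) * w v / real (deg a v)"
    by (auto simp: sum_distrib_right sum_divide_distrib split_def intro!: sum.cong)
  also have "(\<Sum>(p, q, l)\<in>set_mset (edges a). if p = v \<or> q = v then real l else 0) = real (deg a v)"
    unfolding deg_eq_sum[OF assms(1)] of_nat_sum by (intro sum.cong) auto
  finally show ?thesis
    using assms(2) by simp
qed

lemma sum_weights_eq_sum_edge_charges:
  assumes wf: "wf_shape a" and pr: "proper a" and X: "X \<subseteq> verts a"
    and pos: "\<And>v. v \<in> X \<Longrightarrow> 0 < deg a v"
  shows "(\<Sum>v\<in>X. w v) = (\<Sum>(p, q, l)\<in>set_mset (edges a). charge a w X p l + charge a w X q l)"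
proof -
  let ?f = "\<lambda>v p q l. if p = v \<or> q = v then real l * w v / real (deg a v) else 0"
  have finX: "finite X"
    using wf X finite_subset unfolding wf_shape_def by blast
  have "(\<Sum>v\<in>X. w v) = (\<Sum>v\<in>X. \<Sum>(p, q, l)\<in>set_mset (edges a). ?f v p q l)"
    using weight_eq_sum_incident_charges[OF pr pos] by simp
  also have "\<dots> = (\<Sum>(p, q, l)\<in>set_mset (edges a). \<Sum>v\<in>X. ?f v p q l)"
    unfolding split_def by (rule sum.swap)
  also have "\<dots> = (\<Sum>(p, q, l)\<in>set_mset (edges a). charge a w X p l + charge a w X q l)"
  proof -
    have "(\<Sum>v\<in>X. ?f v p q l) = charge a w X p l + charge a w X q l"
      if "(p, q, l) \<in># edges a" for p q l
    proof -
      have "p \<noteq> q"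
        using wf_shape_edgeD[OF wf that] by metis
      then have "(\<Sum>v\<in>X. ?f v p q l)
          = (\<Sum>v\<in>X. (if v = p then real l * w v / real (deg a v) else 0)
                    + (if v = q then real l * w v / real (deg a v) else 0))"
        by (intro sum.cong) auto
      also have "\<dots> = charge a w X p l + charge a w X q l"
        using finX by (simp add: sum.distrib charge_def)
      finally show ?thesis .
    qed
    then show ?thesis
      by (intro sum.cong) (auto split: prod.splits)
  qed
  finally show ?thesis .
qed

lemma in_L_square_odd_deg_iff:
  assumes "in_L \<delta> \<tau> n a" "q \<in> verts a" "\<not> circ a q"
  shows "odd (deg a q) \<longleftrightarrow> (q \<in> Uset a \<longleftrightarrow> q \<notin> Vset a)"
proof -
  have "even (deg a q + (if q \<in> Uset a then 1 else 0) + (if q \<in> Vset a then 1 else 0))"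
    using assms unfolding in_L_def by blast
  then show ?thesis
    by (cases "q \<in> Uset a"; cases "q \<in> Vset a") auto
qed

lemma deg_pos_outside_separator:
  assumes L: "in_L \<delta> \<tau> n a" and sep: "vertex_separator a S" and v: "v \<in> verts a - S"
  shows "0 < deg a v"
proof (cases "circ a v")
  case True
  then show ?thesis
    using L v unfolding in_L_def by fastforce
next
  case square: False
  consider "v \<in> Uset a \<inter> Vset a" | "v \<in> Wset a" | "v \<in> Uset a \<longleftrightarrow> v \<notin> Vset a"
    using v unfolding Wset_def by blast
  then show ?thesis
  proof cases
    case 1
    have "is_path a [v]"
      using v unfolding is_path_def by auto
    then show ?thesis
      using sep 1 v unfolding vertex_separator_def by fastforce
  next
    case 2
    then show ?thesis
      using L unfolding in_L_def by blast
  next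
    case 3
    then have "odd (deg a v)"
      using in_L_square_odd_deg_iff[OF L _ square] v by blast
    then show ?thesis
      by (simp add: odd_pos)
  qed
qed

definition edges_at :: "shape \<Rightarrow> nat \<Rightarrow> (nat \<times> nat \<times> nat) set" where
  "edges_at a c = {e \<in> set_mset (edges a). fst e = c}"

lemma finite_edges_at [simp]: "finite (edges_at a c)"
  unfolding edges_at_def by simp

lemma sum_edges_group_by_circle:
  assumes "wf_shape a"
  shows "(\<Sum>e\<in>set_mset (edges a). f e) = (\<Sum>c\<in>{c \<in> verts a. circ a c}. \<Sum>e\<in>edges_at a c. f e)"
  unfolding edges_at_def
  by (rule sum.group[symmetric]) (use assms in \<open>auto simp: wf_shape_def\<close>)

lemma deg_circle_eq_sum:
  assumes wf: "wf_shape a" and pr: "proper a" and c: "circ a c"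
  shows "deg a c = (\<Sum>(p, q, l)\<in>edges_at a c. l)"
proof -
  have "deg a c = (\<Sum>(p, q, l)\<in>set_mset (edges a). if p = c then l else 0)"
    unfolding deg_eq_sum[OF pr] using wf_shape_edgeD(4)[OF wf] c
    by (intro sum.cong) (auto split: prod.splits)
  also have "\<dots> = (\<Sum>(p, q, l)\<in>edges_at a c. l)"
    unfolding edges_at_def by (simp add: sum.inter_filter split_def)
  finally show ?thesis .
qed

lemma total_label_eq_sum_deg_circles:
  assumes "wf_shape a" "proper a"
  shows "total_label a = (\<Sum>c\<in>{c \<in> verts a. circ a c}. deg a c)"
  unfolding total_label_eq_sum[OF assms(2)] sum_edges_group_by_circle[OF assms(1)]
  using deg_circle_eq_sum[OF assms] by simp

definition pendant_nbrs :: "shape \<Rightarrow> nat set \<Rightarrow> nat \<Rightarrow> nat set" where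
  "pendant_nbrs a X c = {q \<in> X. \<not> circ a q \<and> deg a q = 1 \<and> adjacent a c q}"

lemma finite_pendant_nbrs:
  assumes "wf_shape a" "X \<subseteq> verts a"
  shows "finite (pendant_nbrs a X c)"
proof -
  have "finite X"
    using assms finite_subset unfolding wf_shape_def by blast
  then show ?thesis
    unfolding pendant_nbrs_def by simp
qed

lemma charge_square_le:
  assumes wf: "wf_shape a" and pr: "proper a" and e: "(p, q, l) \<in># edges a"
  shows "charge a (vertex_wt n m a) X q l \<le> (real l + of_bool (q \<in> pendant_nbrs a X p)) / 2"
proof -
  have square: "\<not> circ a q" and l_le: "l \<le> deg a q" and "adjacent a p q"
    using wf_shape_edgeD[OF wf e] label_le_deg[OF pr e] e unfolding adjacent_def by auto
  consider "q \<notin> X" | "q \<in> X" "deg a q = 1" | "q \<in> X" "deg a q \<noteq> 1"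
    by blast
  then show ?thesis
  proof cases
    case 1
    then show ?thesis
      by (simp add: charge_def)
  next
    case 2
    then have "l = 1" "q \<in> pendant_nbrs a X p"
      using l_le wf_shape_edgeD(5)[OF wf e] square \<open>adjacent a p q\<close> unfolding pendant_nbrs_def by auto
    then show ?thesis
      using 2 square by (simp add: charge_def vertex_wt_def)
  next
    case 3
    then have "2 \<le> deg a q"
      using l_le wf_shape_edgeD(5)[OF wf e] by linarith
    then have "real l / real (deg a q) \<le> real l / 2"
      by (intro divide_left_mono) auto
    then show ?thesis
      using 3 square by (simp add: charge_def vertex_wt_def pendant_nbrs_def)
  qed
qed

lemma card_edges_at_into_le:
  assumes "proper a" "finite P"
  shows "card {e \<in> edges_at a c. fst (snd e) \<in> P} \<le> card P"
proof (rule card_inj_on_le[where f = "\<lambda>e. fst (snd e)"])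
  show "inj_on (\<lambda>e. fst (snd e)) {e \<in> edges_at a c. fst (snd e) \<in> P}"
    using proper_edge_label_unique[OF assms(1)]
    by (intro inj_onI) (auto simp: edges_at_def)
qed (use assms(2) in auto)

lemma sum_charges_at_circle_le:
  assumes wf: "wf_shape a" and pr: "proper a" and X: "X \<subseteq> verts a"
    and c: "circ a c" and pos: "0 < deg a c"
  shows "(\<Sum>(p, q, l)\<in>edges_at a c. charge a (vertex_wt n m a) X p l + charge a (vertex_wt n m a) X q l)
    \<le> (if c \<in> X then log (real n) (real m) else 0) + real (deg a c) / 2
       + real (card (pendant_nbrs a X c)) / 2"
proof -
  let ?w = "vertex_wt n m a" and ?P = "pendant_nbrs a X c"
  have deg_c: "real (deg a c) = (\<Sum>(p, q, l)\<in>edges_at a c. real l)"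
    unfolding deg_circle_eq_sum[OF wf pr c] of_nat_sum by (intro sum.cong) (auto split: prod.splits)
  have circle_part: "(\<Sum>(p, q, l)\<in>edges_at a c. charge a ?w X p l) = (if c \<in> X then log (real n) (real m) else 0)"
  proof -
    have "(\<Sum>(p, q, l)\<in>edges_at a c. charge a ?w X p l)
        = (\<Sum>(p, q, l)\<in>edges_at a c. if c \<in> X then real l * ?w c / real (deg a c) else 0)"
      by (intro sum.cong) (auto simp: edges_at_def charge_def)
    also have "\<dots> = (if c \<in> X then real (deg a c) * ?w c / real (deg a c) else 0)"
      unfolding deg_c by (simp add: sum_distrib_right sum_divide_distrib split_def)
    also have "\<dots> = (if c \<in> X then log (real n) (real m) else 0)"
      using pos c by (simp add: vertex_wt_def)
    finally show ?thesis .
  qed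
  have finP: "finite ?P"
    by (rule finite_pendant_nbrs[OF wf X])
  have "charge a ?w X q l \<le> (real l + of_bool (q \<in> ?P)) / 2" if "(p, q, l) \<in> edges_at a c" for p q l
    using that charge_square_le[OF wf pr, of c q l n m X] by (auto simp: edges_at_def)
  then have "(\<Sum>(p, q, l)\<in>edges_at a c. charge a ?w X q l)
      \<le> (\<Sum>(p, q, l)\<in>edges_at a c. (real l + of_bool (q \<in> ?P)) / 2)"
    by (intro sum_mono) (auto split: prod.splits split del: split_of_bool)
  also have "\<dots> = (real (deg a c) + real (card {e \<in> edges_at a c. fst (snd e) \<in> ?P})) / 2"
    unfolding deg_c split_def sum_divide_distrib[symmetric] sum.distrib by (simp add: Int_def)
  also have "\<dots> \<le> (real (deg a c) + real (card ?P)) / 2"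
    using card_edges_at_into_le[OF pr finP] by simp
  finally have square_part: "(\<Sum>(p, q, l)\<in>edges_at a c. charge a ?w X q l)
      \<le> (real (deg a c) + real (card ?P)) / 2" .
  show ?thesis
    using circle_part square_part by (simp add: sum.distrib split_def)
qed

lemma vertex_separator_meets_path3:
  assumes "vertex_separator a S" "u \<in> Uset a" "v \<in> Vset a"
    "adjacent a u c" "adjacent a c v" "distinct [u, c, v]" "{u, c, v} \<subseteq> verts a"
  shows "S \<inter> {u, c, v} \<noteq> {}"
proof -
  have "is_path a [u, c, v]"
    using assms(4-7) unfolding is_path_def by (auto simp: less_Suc_eq)
  then show ?thesis
    using assms(1-3) unfolding vertex_separator_def by fastforce
qed

lemma card_pendant_nbrs_Uset_le_1:
  assumes "wf_shape a" "X \<subseteq> verts a" "proper a" "\<not> left_spider a" "c \<in> verts a" "circ a c"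
  shows "card (pendant_nbrs a X c \<inter> Uset a) \<le> 1"
proof -
  have "finite (pendant_nbrs a X c \<inter> Uset a)"
    using finite_pendant_nbrs[OF assms(1,2)] by blast
  moreover have "i = j" if "i \<in> pendant_nbrs a X c \<inter> Uset a" "j \<in> pendant_nbrs a X c \<inter> Uset a" for i j
    using assms(3-6) that unfolding left_spider_def pendant_nbrs_def by blast
  ultimately show ?thesis
    unfolding One_nat_def using card_le_Suc0_iff_eq by blast
qed

lemma card_pendant_nbrs_Vset_le_1:
  assumes "wf_shape a" "X \<subseteq> verts a" "proper a" "\<not> right_spider a" "c \<in> verts a" "circ a c"
  shows "card (pendant_nbrs a X c \<inter> Vset a) \<le> 1"
proof -
  have "finite (pendant_nbrs a X c \<inter> Vset a)"
    using finite_pendant_nbrs[OF assms(1,2)] by blast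
  moreover have "i = j" if "i \<in> pendant_nbrs a X c \<inter> Vset a" "j \<in> pendant_nbrs a X c \<inter> Vset a" for i j
    using assms(3-6) that unfolding right_spider_def pendant_nbrs_def by blast
  ultimately show ?thesis
    unfolding One_nat_def using card_le_Suc0_iff_eq by blast
qed

lemma pendant_nbrs_Uset_or_Vset:
  assumes L: "in_L \<delta> \<tau> n a" and q: "q \<in> pendant_nbrs a X c" and X: "X \<subseteq> verts a"
  shows "q \<in> Uset a \<longleftrightarrow> q \<notin> Vset a"
  using in_L_square_odd_deg_iff[OF L, of q] q X unfolding pendant_nbrs_def by auto

lemma pendant_nbrs_one_sided:
  assumes L: "in_L \<delta> \<tau> n a" and sep: "vertex_separator a S" and c: "c \<in> verts a" "circ a c" "c \<notin> S"
  shows "pendant_nbrs a (verts a - S) c \<inter> Uset a = {} \<or> pendant_nbrs a (verts a - S) c \<inter> Vset a = {}"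
proof (rule ccontr)
  let ?P = "pendant_nbrs a (verts a - S) c"
  assume "\<not> ?thesis"
  then obtain u v where u: "u \<in> ?P" "u \<in> Uset a" and v: "v \<in> ?P" "v \<in> Vset a"
    by blast
  have "adjacent a u c" "adjacent a c v"
    using u(1) v(1) adjacent_sym unfolding pendant_nbrs_def by blast+
  moreover have "distinct [u, c, v]"
    using u v c pendant_nbrs_Uset_or_Vset[OF L] unfolding pendant_nbrs_def by auto
  moreover have "{u, c, v} \<subseteq> verts a"
    using u(1) v(1) c unfolding pendant_nbrs_def by blast
  ultimately have "S \<inter> {u, c, v} \<noteq> {}"
    by (rule vertex_separator_meets_path3[OF sep u(2) v(2)])
  then show False
    using u(1) v(1) c(3) unfolding pendant_nbrs_def by blast
qed

lemma card_pendant_nbrs_le: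
  assumes wf: "wf_shape a" and L: "in_L \<delta> \<tau> n a" and not_spider: "\<not> spider a"
    and sep: "vertex_separator a S" and c: "c \<in> verts a" "circ a c"
  shows "card (pendant_nbrs a (verts a - S) c) \<le> (if c \<in> S then 2 else 1)"
proof -
  let ?P = "pendant_nbrs a (verts a - S) c"
  have pr: "proper a"
    using L unfolding in_L_def by blast
  have X: "verts a - S \<subseteq> verts a"
    by blast
  have "card ?P \<le> card (?P \<inter> Uset a) + card (?P \<inter> Vset a)"
  proof -
    have "?P = (?P \<inter> Uset a) \<union> (?P \<inter> Vset a)"
      using pendant_nbrs_Uset_or_Vset[OF L _ X] by blast
    then show ?thesis
      by (metis card_Un_le)
  qed
  moreover have "card (?P \<inter> Uset a) \<le> 1" "card (?P \<inter> Vset a) \<le> 1"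
    using card_pendant_nbrs_Uset_le_1[OF wf X pr _ c] card_pendant_nbrs_Vset_le_1[OF wf X pr _ c]
      not_spider unfolding spider_def by auto
  moreover have "?P \<inter> Uset a = {} \<or> ?P \<inter> Vset a = {}" if "c \<notin> S"
    using pendant_nbrs_one_sided[OF L sep c that] .
  ultimately show ?thesis
    by (cases "c \<in> S") auto
qed

lemma charge_budget_le:
  fixes s t r k \<epsilon> :: real
  assumes "s \<le> (if b then t else 0) + r / 2 + k / 2" "k \<le> (if b then 1 else 2)"
    "t \<le> 3/2 - \<epsilon>" "\<epsilon> \<le> 1" "4 \<le> r"
  shows "s \<le> (1 - \<epsilon>/4) * r"
proof -
  have "(1/2 - \<epsilon>/4) * 4 \<le> (1/2 - \<epsilon>/4) * r"
    using assms(4,5) by (intro mult_left_mono) auto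
  then show ?thesis
    using assms(1-4) by (cases b) (simp_all add: algebra_simps)
qed

lemma wt_outside_separator_le:
  assumes wf: "wf_shape a" and L: "in_L \<delta> \<tau> n a" and not_spider: "\<not> spider a"
    and sep: "vertex_separator a S" and \<epsilon>: "\<epsilon> \<le> 1" and t: "log (real n) (real m) \<le> 3/2 - \<epsilon>"
  shows "wt n m a (verts a - S) \<le> (1 - \<epsilon>/4) * real (total_label a)"
proof -
  let ?X = "verts a - S" and ?w = "vertex_wt n m a" and ?C = "{c \<in> verts a. circ a c}"
  let ?charges = "\<lambda>(p, q, l). charge a ?w ?X p l + charge a ?w ?X q l"
  have pr: "proper a"
    using L unfolding in_L_def by blast
  have "finite ?X"
    using wf unfolding wf_shape_def by blast
  then have "wt n m a ?X = (\<Sum>v\<in>?X. ?w v)"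
    by (rule wt_eq_sum_vertex_wt)
  also have "\<dots> = (\<Sum>e\<in>set_mset (edges a). ?charges e)"
    using deg_pos_outside_separator[OF L sep] by (intro sum_weights_eq_sum_edge_charges[OF wf pr]) auto
  also have "\<dots> = (\<Sum>c\<in>?C. \<Sum>e\<in>edges_at a c. ?charges e)"
    by (rule sum_edges_group_by_circle[OF wf])
  also have "\<dots> \<le> (\<Sum>c\<in>?C. (1 - \<epsilon>/4) * real (deg a c))"
  proof (rule sum_mono)
    fix c
    assume "c \<in> ?C"
    then have c: "c \<in> verts a" "circ a c"
      by auto
    have deg4: "4 \<le> real (deg a c)"
      using L c unfolding in_L_def by auto
    have "(\<Sum>e\<in>edges_at a c. ?charges e) \<le> (if c \<in> ?X then log (real n) (real m) else 0)
        + real (deg a c) / 2 + real (card (pendant_nbrs a ?X c)) / 2"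
      using deg4 by (intro sum_charges_at_circle_le[OF wf pr _ c(2)]) auto
    moreover have "real (card (pendant_nbrs a ?X c)) \<le> (if c \<in> ?X then 1 else 2)"
      using card_pendant_nbrs_le[OF wf L not_spider sep c] c(1) by auto
    ultimately show "(\<Sum>e\<in>edges_at a c. ?charges e) \<le> (1 - \<epsilon>/4) * real (deg a c)"
      using t \<epsilon> deg4 by (rule charge_budget_le)
  qed
  also have "\<dots> = (1 - \<epsilon>/4) * real (total_label a)"
    by (simp add: total_label_eq_sum_deg_circles[OF wf pr] sum_distrib_left)
  finally show ?thesis .
qed

lemma inverse_powr_mult_powr_le:
  fixes b x y \<epsilon> :: real
  assumes "1 < b" "x \<le> (1 - \<epsilon>/4) * y"
  shows "1 / b powr (y/2) * b powr (x/2) \<le> 1 / b powr (1/8 * \<epsilon> * y)"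
proof -
  have "1 / b powr (y/2) * b powr (x/2) = b powr (x/2 - y/2)"
    by (simp add: powr_diff)
  also have "\<dots> \<le> b powr (- (1/8 * \<epsilon> * y))"
    using assms by (intro powr_mono) (auto simp: algebra_simps)
  also have "\<dots> = 1 / b powr (1/8 * \<epsilon> * y)"
    by (simp add: powr_minus_divide)
  finally show ?thesis .
qed

theorem lemma5p2:
  shows "\<exists>c::real. c > 0 \<and>
    (\<forall>(\<delta>::real) (\<tau>::real) (n::nat) (m::nat) (\<epsilon>::real) (a::shape) (S::nat set).
       0 < \<delta> \<longrightarrow> 0 < \<tau> \<longrightarrow> 2 \<le> n \<longrightarrow> 0 < \<epsilon> \<longrightarrow> \<epsilon> \<le> 1 \<longrightarrow>
       1 \<le> m \<longrightarrow> real m \<le> real n powr (3/2 - \<epsilon>) \<longrightarrow>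
       wf_shape a \<longrightarrow> in_L \<delta> \<tau> n a \<longrightarrow>
       \<not> trivial_shape a \<longrightarrow> \<not> spider a \<longrightarrow>
       min_vertex_separator n m a S \<longrightarrow>
       1 / real n powr (real (total_label a) / 2) *
         real n powr ((wt n m a (verts a) - wt n m a S) / 2)
       \<le> 1 / real n powr (c * \<epsilon> * real (total_label a)))"
proof (intro exI[of _ "1/8"] conjI allI impI)
  fix \<delta> \<tau> \<epsilon> :: real and n m :: nat and a :: shape and S :: "nat set"
  assume "0 < \<delta>" "0 < \<tau>" and n: "2 \<le> n" and "0 < \<epsilon>" and \<epsilon>: "\<epsilon> \<le> 1" and m: "1 \<le> m"
    and m_le: "real m \<le> real n powr (3/2 - \<epsilon>)" and wf: "wf_shape a" and L: "in_L \<delta> \<tau> n a"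
    and "\<not> trivial_shape a" and not_spider: "\<not> spider a" and min_sep: "min_vertex_separator n m a S"
  have sep: "vertex_separator a S"
    using min_sep unfolding min_vertex_separator_def by blast
  have "log (real n) (real m) \<le> log (real n) (real n powr (3/2 - \<epsilon>))"
    using n m m_le by (subst log_le_cancel_iff) auto
  then have "log (real n) (real m) \<le> 3/2 - \<epsilon>"
    using n by simp
  then have "wt n m a (verts a) - wt n m a S \<le> (1 - \<epsilon>/4) * real (total_label a)"
    using wt_outside_separator_le[OF wf L not_spider sep \<epsilon>] wf sep
    by (simp add: wt_diff wf_shape_def vertex_separator_def)
  then show "1 / real n powr (real (total_label a) / 2) *
      real n powr ((wt n m a (verts a) - wt n m a S) / 2)
    \<le> 1 / real n powr (1/8 * \<epsilon> * real (total_label a))"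
    using n by (intro inverse_powr_mult_powr_le) auto
qed simp

end
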